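(* Let $K\subset\mathbb{R}^2$ be a convex set such that a maximal-area triangle $T$ contained in $K$ is an equilateral triangle of side length $1$ with barycenter at the origin $o$. Then every point $p\in\partial K$ is $(60^\circ,\tfrac12)$-bisecting in $K$.
   Context: For a convex set $C$ containing $o$ and $p\in\partial C$, $p$ is called $(\theta,\ell)$-bisecting if the unique isosceles triangle $T_p(\theta,\ell)$ with apex $p$, apex angle $\theta$, two equal sides of length $\ell$ emanating from $p$, and such that the segment $po$ internally bisects the apex angle, is contained in $C$. *)

theory Defs
  imports "HOL-Analysis.Analysis"
begin

text \<open>The plane R^2 is modelled as the complex numbers; the origin o is 0.\<close>

definition triangle :: "complex \<Rightarrow> complex \<Rightarrow> complex \<Rightarrow> complex set" where
  "triangle a b c = convex hull {a, b, c}"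

definition tri_area :: "complex \<Rightarrow> complex \<Rightarrow> complex \<Rightarrow> real" where
  "tri_area a b c = measure lebesgue (triangle a b c)"

definition max_area_triangle :: "complex set \<Rightarrow> complex \<Rightarrow> complex \<Rightarrow> complex \<Rightarrow> bool" where
  "max_area_triangle K a b c \<longleftrightarrow> triangle a b c \<subseteq> K \<and>
     (\<forall>a' b' c'. triangle a' b' c' \<subseteq> K \<longrightarrow> tri_area a' b' c' \<le> tri_area a b c)"

text \<open>The isosceles triangle T_p(theta, l): apex p, apex angle theta, two equal sides of
  length l from p, and the direction from p towards o (=0) bisects the apex angle.\<close>
definition bisect_triangle :: "complex \<Rightarrow> real \<Rightarrow> real \<Rightarrow> complex set" where
  "bisect_triangle p \<theta> l =
     (let u = - p / complex_of_real (cmod p) in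
      triangle p (p + of_real l * cis (\<theta>/2) * u) (p + of_real l * cis (-\<theta>/2) * u))"

definition bisecting :: "complex set \<Rightarrow> real \<Rightarrow> real \<Rightarrow> complex \<Rightarrow> bool" where
  "bisecting C \<theta> l p \<longleftrightarrow> p \<in> frontier C \<and> bisect_triangle p \<theta> l \<subseteq> C"

end

theory Submission
  imports Defs
begin

(* Write the vertices of T as v, v \<omega>, v cnj \<omega> with \<omega> = cis (2 pi / 3) and cmod v = 1 / sqrt 3.
   Maximality of T, compared with the triangle p, v \<omega>, v cnj \<omega>, gives Re (p / v) \<le> 1 for every
   p in K and every vertex v. A boundary point p of K is not interior to T, so Re (p / v) \<le> -1/2 for
   some vertex v: p lies in the corner triangle beyond the side opposite v. The bisecting triangle at p
   is equilateral with side 1/2, and its two base vertices lie in T \<union> conv {p, v \<omega>, v cnj \<omega>} \<subseteq> K: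
   scaled by 1/v, they lie in the incircle of T when cmod (p / v) \<le> 1, on the inner side of the two
   sides of T through v when cmod (p / v) \<ge> 1, and in conv {p / v, \<omega>, cnj \<omega>} once they cross the
   side opposite v. *)

definition \<omega> :: complex where
  "\<omega> = Complex (-1/2) (sqrt 3 / 2)"

lemma omega_mult_cnj: "\<omega> * cnj \<omega> = 1"
  and omega_mult_omega: "\<omega> * \<omega> = cnj \<omega>"
  and cnj_omega_mult_cnj: "cnj \<omega> * cnj \<omega> = \<omega>"
  by (simp_all add: \<omega>_def complex_eq_iff)

lemma norm_omega: "cmod \<omega> = 1"
  by (simp add: \<omega>_def cmod_def power2_eq_square)

lemma omega_neq_zero [simp]: "\<omega> \<noteq> 0"
  using norm_omega by auto

lemma Re_omega [simp]: "Re \<omega> = -1/2"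
  and Im_omega [simp]: "Im \<omega> = sqrt 3 / 2"
  by (simp_all add: \<omega>_def)

lemma div_mult_omega:
  "z / (v * \<omega>) = z / v * cnj \<omega>" "z / (v * cnj \<omega>) = z / v * \<omega>"
proof -
  have "inverse \<omega> = cnj \<omega>" "inverse (cnj \<omega>) = \<omega>"
    using omega_mult_cnj by (simp_all add: inverse_unique mult.commute)
  then show "z / (v * \<omega>) = z / v * cnj \<omega>" "z / (v * cnj \<omega>) = z / v * \<omega>"
    by (simp_all add: divide_inverse)
qed

lemma rotated_vertices:
  "u \<in> {v, v * \<omega>, v * cnj \<omega>} \<Longrightarrow> {u, u * \<omega>, u * cnj \<omega>} = {v, v * \<omega>, v * cnj \<omega>}"
  by (auto simp: mult.assoc omega_mult_cnj omega_mult_omega cnj_omega_mult_cnj mult.commute[of "cnj \<omega>" \<omega>])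

section \<open>Area of triangles in the complex plane\<close>

definition vec_of_complex :: "complex \<Rightarrow> real^2" where
  "vec_of_complex z = vector [Re z, Im z]"

definition complex_of_vec :: "real^2 \<Rightarrow> complex" where
  "complex_of_vec v = Complex (v$1) (v$2)"

lemma vec_of_complex_nth [simp]: "vec_of_complex z $ 1 = Re z" "vec_of_complex z $ 2 = Im z"
  by (simp_all add: vec_of_complex_def)

lemma complex_of_vec_inverse [simp]: "complex_of_vec (vec_of_complex z) = z"
  by (simp add: complex_of_vec_def complex_eq_iff)

lemma vec_of_complex_inverse [simp]: "vec_of_complex (complex_of_vec v) = v"
  by (simp add: complex_of_vec_def vec_eq_iff forall_2)

lemma linear_vec_of_complex: "linear vec_of_complex"
  by (rule linearI) (simp_all add: vec_eq_iff forall_2)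

lemma complex_of_vec_borel_measurable: "complex_of_vec \<in> borel_measurable borel"
proof -
  have "continuous_on UNIV complex_of_vec"
    unfolding complex_of_vec_def Complex_eq by (intro continuous_intros)
  then show ?thesis by (rule borel_measurable_continuous_onI)
qed

lemma prod_Basis_vec2: "(\<Prod>b\<in>(Basis :: (real^2) set). f b) = f (axis 1 1) * f (axis 2 1)"
proof -
  have Basis: "(Basis :: (real^2) set) = {axis 1 1, axis 2 1}"
    by (auto simp: Basis_vec_def) (metis exhaust_2)
  have "axis 1 (1::real) \<noteq> (axis 2 1 :: real^2)" by (simp add: axis_eq_axis)
  then show ?thesis unfolding Basis by simp
qed

lemma distr_lborel_complex_of_vec: "distr (lborel :: (real^2) measure) borel complex_of_vec = lborel"
proof (rule lborel_eqI[symmetric])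
  fix l u :: complex
  assume le_Basis: "\<And>b. b \<in> Basis \<Longrightarrow> l \<bullet> b \<le> u \<bullet> b"
  have le: "Re l \<le> Re u" "Im l \<le> Im u"
    using le_Basis[of 1] le_Basis[of \<i>] by (auto simp: Basis_complex_def)
  have "emeasure (distr lborel borel complex_of_vec) (box l u)
      = emeasure lborel (complex_of_vec -` box l u \<inter> space lborel)"
    by (rule emeasure_distr) (use complex_of_vec_borel_measurable in auto)
  also have "complex_of_vec -` box l u \<inter> space lborel = box (vec_of_complex l) (vec_of_complex u)"
    by (auto simp: mem_box_cart mem_box Basis_complex_def complex_of_vec_def forall_2)
  also have "emeasure lborel \<dots> = (\<Prod>b\<in>Basis. (vec_of_complex u - vec_of_complex l) \<bullet> b)"
  proof (rule emeasure_lborel_box)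
    fix b :: "real^2"
    assume "b \<in> Basis"
    then obtain i where "b = axis i 1" by (auto simp: Basis_vec_def)
    then show "vec_of_complex l \<bullet> b \<le> vec_of_complex u \<bullet> b"
      using exhaust_2[of i] le by (auto simp: inner_axis)
  qed
  also have "\<dots> = (\<Prod>b\<in>Basis. (u - l) \<bullet> b)"
    by (simp add: prod_Basis_vec2 Basis_complex_def cart_eq_inner_axis[symmetric] inner_axis)
  finally show "emeasure (distr lborel borel complex_of_vec) (box l u) = (\<Prod>b\<in>Basis. (u - l) \<bullet> b)" .
qed simp

lemma tri_area_eq:
  "tri_area A B C = \<bar>(Re C - Re A) * (Im B - Im A) - (Re B - Re A) * (Im C - Im A)\<bar> / 2"
proof -
  let ?S = "convex hull {A, B, C}"
  have "?S \<in> sets borel"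
    using finite_imp_compact_convex_hull[of "{A, B, C}"] by (auto dest: compact_imp_closed)
  then have "measure lebesgue ?S = measure (distr lborel borel complex_of_vec) ?S"
    by (simp add: distr_lborel_complex_of_vec)
  also have "\<dots> = measure lborel (complex_of_vec -` ?S \<inter> space lborel)"
    by (rule measure_distr) (use complex_of_vec_borel_measurable \<open>?S \<in> sets borel\<close> in auto)
  also have "complex_of_vec -` ?S \<inter> space lborel = vec_of_complex ` ?S"
    by (auto simp: image_iff) (metis vec_of_complex_inverse)
  also have "\<dots> = convex hull {vec_of_complex A, vec_of_complex B, vec_of_complex C}"
    by (simp add: convex_hull_linear_image[OF linear_vec_of_complex])
  also have "measure lborel \<dots> = \<bar>(Re C - Re A) * (Im B - Im A) - (Re B - Re A) * (Im C - Im A)\<bar> / 2"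
    by (subst content_triangle) simp
  finally show ?thesis unfolding tri_area_def triangle_def .
qed

lemma tri_area_rotated_vertex:
  "tri_area (v * z) (v * \<omega>) (v * cnj \<omega>) = (cmod v)\<^sup>2 * sqrt 3 * \<bar>Re z + 1/2\<bar> / 2"
proof -
  have det: "(Re (v * cnj \<omega>) - Re (v * z)) * (Im (v * \<omega>) - Im (v * z))
      - (Re (v * \<omega>) - Re (v * z)) * (Im (v * cnj \<omega>) - Im (v * z))
      = - ((cmod v)\<^sup>2 * sqrt 3 * (Re z + 1/2))"
    unfolding cmod_power2 by (simp add: \<omega>_def algebra_simps power2_eq_square)
  show ?thesis
    unfolding tri_area_eq det abs_minus_cancel abs_mult by simp
qed

section \<open>The maximal equilateral triangle\<close>

lemma equilateral_centred_vertices: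
  fixes a b c :: complex
  assumes "dist a b = 1" "dist b c = 1" "dist c a = 1" and "a + b + c = 0"
  shows "{a, b, c} = {a, a * \<omega>, a * cnj \<omega>}" and "cmod a * sqrt 3 = 1"
proof -
  have "c = (a + b + c) - a - b" by simp
  with assms(4) have c: "c = - a - b" by simp
  have dist_sq: "(Re u - Re w)\<^sup>2 + (Im u - Im w)\<^sup>2 = 1" if "dist u w = 1" for u w :: complex
    using that by (simp add: dist_norm cmod_def)
  define A where "A = Re a * Re a + Im a * Im a"
  define B where "B = Re b * Re b + Im b * Im b"
  define P where "P = Re a * Re b + Im a * Im b"
  have "A + B - 2 * P = 1" "A + 4 * B + 4 * P = 1" "4 * A + B + 4 * P = 1"
    using dist_sq[OF assms(1)] dist_sq[OF assms(2)] dist_sq[OF assms(3)]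
    by (simp_all add: A_def B_def P_def c power2_eq_square algebra_simps)
  then have A: "A = 1/3" and B: "B = 1/3" and P: "P = -1/6" by linarith+
  then have "a \<noteq> 0" by (auto simp: A_def)
  have Re_ratio: "Re (b / a) = -1/2"
    using A P by (simp add: Re_divide A_def P_def power2_eq_square algebra_simps)
  have "Im (b / a) = (Re a * Im b - Im a * Re b) / A"
    by (simp add: Im_divide A_def power2_eq_square algebra_simps)
  moreover have "(Re a * Im b - Im a * Re b)\<^sup>2 = A * B - P * P"
    by (simp add: A_def B_def P_def power2_eq_square algebra_simps)
  ultimately have "(Im (b / a))\<^sup>2 = (A * B - P * P) / A\<^sup>2"
    by (simp add: power_divide)
  also have "\<dots> = (sqrt 3 / 2)\<^sup>2"
    unfolding A B P by (simp add: power2_eq_square)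
  finally have "(Im (b / a))\<^sup>2 = (sqrt 3 / 2)\<^sup>2" .
  then have "Im (b / a) = sqrt 3 / 2 \<or> Im (b / a) = - (sqrt 3 / 2)"
    by (simp add: power2_eq_iff)
  then have "b / a = \<omega> \<or> b / a = cnj \<omega>"
    using Re_ratio by (auto simp: complex_eq_iff \<omega>_def)
  then have "b = a * \<omega> \<and> c = a * (- 1 - \<omega>) \<or> b = a * cnj \<omega> \<and> c = a * (- 1 - cnj \<omega>)"
    using \<open>a \<noteq> 0\<close> unfolding c by (auto simp: field_simps)
  moreover have "- 1 - \<omega> = cnj \<omega>" "- 1 - cnj \<omega> = \<omega>"
    by (simp_all add: \<omega>_def complex_eq_iff)
  ultimately show "{a, b, c} = {a, a * \<omega>, a * cnj \<omega>}"
    by auto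
  have "cmod a = sqrt (1/3)"
    using A by (simp add: cmod_def A_def power2_eq_square)
  then show "cmod a * sqrt 3 = 1"
    by (simp add: real_sqrt_mult[symmetric])
qed

lemma mem_convex_hull_omega:
  assumes "-1/2 \<le> Re w" "-1/2 \<le> Re (w * \<omega>)" "-1/2 \<le> Re (w * cnj \<omega>)"
  shows "w \<in> convex hull {1, \<omega>, cnj \<omega>}"
proof -
  define l0 where "l0 = (1 + 2 * Re w) / 3"
  define l1 where "l1 = (1 + 2 * Re (w * cnj \<omega>)) / 3"
  define l2 where "l2 = (1 + 2 * Re (w * \<omega>)) / 3"
  have "l0 \<ge> 0" "l1 \<ge> 0" "l2 \<ge> 0"
    using assms by (simp_all add: l0_def l1_def l2_def)
  moreover have "l0 + l1 + l2 = 1"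
    by (simp add: l0_def l1_def l2_def field_simps)
  moreover have "w = l0 *\<^sub>R 1 + l1 *\<^sub>R \<omega> + l2 *\<^sub>R cnj \<omega>"
    by (simp add: complex_eq_iff l0_def l1_def l2_def \<omega>_def field_simps)
  ultimately show ?thesis
    unfolding convex_hull_3 by blast
qed

lemma norm_le_half_mem_convex_hull_omega:
  assumes "cmod w \<le> 1/2"
  shows "w \<in> convex hull {1, \<omega>, cnj \<omega>}"
proof (rule mem_convex_hull_omega)
  have "- Re (w * u) \<le> 1/2" if "cmod u = 1" for u
    using abs_Re_le_cmod[of "w * u"] assms that by (simp add: norm_mult)
  from this[of 1] this[of \<omega>] this[of "cnj \<omega>"] norm_omega
  show "-1/2 \<le> Re w" "-1/2 \<le> Re (w * \<omega>)" "-1/2 \<le> Re (w * cnj \<omega>)"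
    by simp_all
qed

lemma mult_mem_convex_hull_3:
  fixes v w x y z :: complex
  shows "w \<in> convex hull {x, y, z} \<Longrightarrow> v * w \<in> convex hull {v * x, v * y, v * z}"
  using convex_hull_linear_image[OF linear_times, of v "{x, y, z}"] by auto

lemma frontier_point_beyond_side:
  assumes T: "convex hull {v, v * \<omega>, v * cnj \<omega>} \<subseteq> K" and "v \<noteq> 0" and p: "p \<in> frontier K"
  shows "\<exists>u \<in> {v, v * \<omega>, v * cnj \<omega>}. Re (p / u) \<le> -1/2"
proof (rule ccontr)
  define U where "U = {q. -1/2 < Re (q / v) \<and> -1/2 < Re (q / v * \<omega>) \<and> -1/2 < Re (q / v * cnj \<omega>)}"
  assume "\<not> ?thesis"
  then have "p \<in> U" by (auto simp: U_def div_mult_omega)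
  have "open U"
    unfolding U_def using \<open>v \<noteq> 0\<close>
    by (intro open_Collect_conj open_Collect_less continuous_intros) auto
  have "U \<subseteq> convex hull {v, v * \<omega>, v * cnj \<omega>}"
  proof
    fix q
    assume "q \<in> U"
    then have "q / v \<in> convex hull {1, \<omega>, cnj \<omega>}"
      by (intro mem_convex_hull_omega) (auto simp: U_def)
    then show "q \<in> convex hull {v, v * \<omega>, v * cnj \<omega>}"
      using mult_mem_convex_hull_3[of "q / v" 1 \<omega> "cnj \<omega>" v] \<open>v \<noteq> 0\<close> by simp
  qed
  with T \<open>open U\<close> have "U \<subseteq> interior K"
    by (meson interior_maximal order_trans)
  with \<open>p \<in> U\<close> p show False
    by (auto simp: frontier_def)
qed

lemma max_area_triangle_Re_div_le:
  assumes K: "convex K" and max: "max_area_triangle K a b c"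
    and abc: "{a, b, c} = {v, v * \<omega>, v * cnj \<omega>}" and "v \<noteq> 0" and "p \<in> K"
  shows "Re (p / v) \<le> 1"
proof -
  have "{a, b, c} \<subseteq> K"
    using max hull_subset[of "{a, b, c}"] by (auto simp: max_area_triangle_def triangle_def)
  with abc \<open>p \<in> K\<close> K have "triangle p (v * \<omega>) (v * cnj \<omega>) \<subseteq> K"
    unfolding triangle_def by (intro hull_minimal) auto
  with max have "tri_area (v * (p / v)) (v * \<omega>) (v * cnj \<omega>) \<le> tri_area (v * 1) (v * \<omega>) (v * cnj \<omega>)"
    using \<open>v \<noteq> 0\<close> abc by (simp add: max_area_triangle_def tri_area_def triangle_def)
  then have "(cmod v)\<^sup>2 * (2 * \<bar>Re (p / v) + 1/2\<bar>) \<le> (cmod v)\<^sup>2 * 3"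
    unfolding tri_area_rotated_vertex by (simp add: mult.left_commute)
  then have "2 * \<bar>Re (p / v) + 1/2\<bar> \<le> 3"
    by (rule mult_left_le_imp_le) (use \<open>v \<noteq> 0\<close> in simp)
  then show ?thesis
    by (simp add: abs_if split: if_splits)
qed

lemma max_area_triangle_Re_div_le_rotated:
  assumes K: "convex K" and max: "max_area_triangle K a b c"
    and abc: "{a, b, c} = {v, v * \<omega>, v * cnj \<omega>}" and "v \<noteq> 0" and "p \<in> K"
  shows "Re (p / v * \<omega>) \<le> 1" and "Re (p / v * cnj \<omega>) \<le> 1"
proof -
  have "Re (p / u) \<le> 1" if "u \<in> {v, v * \<omega>, v * cnj \<omega>}" for u
  proof (rule max_area_triangle_Re_div_le[OF K max _ _ \<open>p \<in> K\<close>])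
    show "{a, b, c} = {u, u * \<omega>, u * cnj \<omega>}"
      using abc rotated_vertices[OF that] by simp
    show "u \<noteq> 0"
      using that \<open>v \<noteq> 0\<close> by auto
  qed
  from this[of "v * cnj \<omega>"] this[of "v * \<omega>"]
  show "Re (p / v * \<omega>) \<le> 1" "Re (p / v * cnj \<omega>) \<le> 1"
    by (simp_all add: div_mult_omega)
qed

section \<open>Base vertices of the bisecting triangle\<close>

(* Scaled so that T becomes the triangle 1, \<omega>, cnj \<omega>, the legs have length sqrt 3 / 2; for e = 1 and
   e = -1 this is a base vertex of the bisecting triangle at z, as Complex (sqrt 3 / 2) (e / 2) is
   cis (e * pi / 6). *)
definition bisect_base :: "real \<Rightarrow> complex \<Rightarrow> complex" where
  "bisect_base e z = z - of_real (sqrt 3 / (2 * cmod z)) * Complex (sqrt 3 / 2) (e / 2) * z"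

lemma bisect_base_coords:
  assumes "z \<noteq> 0"
  shows "4 * cmod z * Re (bisect_base e z) = (4 * cmod z - 3) * Re z + e * sqrt 3 * Im z"
    and "4 * cmod z * Im (bisect_base e z) = (4 * cmod z - 3) * Im z - e * sqrt 3 * Re z"
  using assms by (simp_all add: bisect_base_def field_simps)

lemma bisect_base_cnj: "bisect_base e (cnj z) = cnj (bisect_base (- e) z)"
  by (simp add: bisect_base_def complex_eq_iff)

lemma norm_bisect_base_squared:
  assumes e: "e = 1 \<or> e = -1" and "z \<noteq> 0"
  shows "(cmod (bisect_base e z))\<^sup>2 = (cmod z)\<^sup>2 - 3/2 * cmod z + 3/4"
proof -
  let ?R = "cmod z" and ?q = "bisect_base e z"
  have "(4 * ?R)\<^sup>2 * (cmod ?q)\<^sup>2 = (4 * ?R * Re ?q)\<^sup>2 + (4 * ?R * Im ?q)\<^sup>2"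
    by (simp add: cmod_power2 power_mult_distrib algebra_simps)
  also have "\<dots> = ((4 * ?R - 3)\<^sup>2 + 3 * e\<^sup>2) * ?R\<^sup>2"
    unfolding bisect_base_coords[OF \<open>z \<noteq> 0\<close>] cmod_power2[of z]
    by (simp add: power2_eq_square algebra_simps)
  also have "\<dots> = (4 * ?R)\<^sup>2 * (?R\<^sup>2 - 3/2 * ?R + 3/4)"
    using e by (auto simp: power2_eq_square algebra_simps)
  finally show ?thesis
    using \<open>z \<noteq> 0\<close> by simp
qed

lemma norm_bisect_base_le_half:
  assumes "e = 1 \<or> e = -1" and "1/2 \<le> cmod z" "cmod z \<le> 1"
  shows "cmod (bisect_base e z) \<le> 1/2"
proof (rule power2_le_imp_le)
  have "z \<noteq> 0"
    using assms by auto
  have "(cmod z - 1/2) * (cmod z - 1) \<le> 0"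
    using assms by (intro mult_nonneg_nonpos) auto
  moreover have "(cmod z - 1/2) * (cmod z - 1) = (cmod z)\<^sup>2 - 3/2 * cmod z + 1/2"
    by (simp add: power2_eq_square field_simps)
  ultimately have "(cmod z)\<^sup>2 - 3/2 * cmod z + 1/2 \<le> 0"
    by linarith
  then show "(cmod (bisect_base e z))\<^sup>2 \<le> (1/2)\<^sup>2"
    unfolding norm_bisect_base_squared[OF assms(1) \<open>z \<noteq> 0\<close>] by (simp add: power_divide)
qed simp

lemma bisect_base_far_side:
  assumes e: "e = 1 \<or> e = -1" and z: "Re z \<le> -1/2" "Re (z * cnj \<omega>) \<le> 1" and R: "1 \<le> cmod z"
  shows "-1/2 \<le> Re (bisect_base e z * \<omega>)"
proof -
  let ?R = "cmod z" and ?q = "bisect_base e z" and ?x = "Re z" and ?y = "Im z"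
  have "z \<noteq> 0" using R by auto
  have "4 * ?R * (1 - Re ?q - sqrt 3 * Im ?q) = 4 * ?R - 4 * ?R * Re ?q - sqrt 3 * (4 * ?R * Im ?q)"
    by (simp add: algebra_simps)
  also have "\<dots> = 4 * ?R * (1 - ?x - sqrt 3 * ?y) + 3 * ?x * (1 + e) + sqrt 3 * ?y * (3 - e)"
    unfolding bisect_base_coords[OF \<open>z \<noteq> 0\<close>] by (simp add: algebra_simps)
  finally have key: "4 * ?R * (1 - Re ?q - sqrt 3 * Im ?q)
      = 4 * ?R * (1 - ?x - sqrt 3 * ?y) + 3 * ?x * (1 + e) + sqrt 3 * ?y * (3 - e)" .
  have h: "sqrt 3 * ?y \<le> 2 + ?x"
    using z(2) by (simp add: field_simps)
  then have "0 \<le> 1 - ?x - sqrt 3 * ?y"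
    using z(1) by linarith
  then have "4 * (1 - ?x - sqrt 3 * ?y) \<le> 4 * ?R * (1 - ?x - sqrt 3 * ?y)"
    using R by (intro mult_right_mono) auto
  then have "0 \<le> 4 * ?R * (1 - Re ?q - sqrt 3 * Im ?q)"
    unfolding key using e z(1) h by auto
  then have "0 \<le> 1 - Re ?q - sqrt 3 * Im ?q"
    using \<open>z \<noteq> 0\<close> by (simp add: zero_le_mult_iff)
  then show ?thesis
    by (simp add: field_simps)
qed

(* The corner triangle conv {\<omega>, cnj \<omega>, -2} lies in the unit disc around -1 and outside the
   open unit discs around - \<omega> and - cnj \<omega>. *)
lemma corner_region_discs:
  assumes "Re z \<le> -1/2" "Re (z * \<omega>) \<le> 1" "Re (z * cnj \<omega>) \<le> 1"
  shows "(cmod z)\<^sup>2 + 2 * Re z \<le> 0"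
    and "0 \<le> (cmod z)\<^sup>2 - Re z + sqrt 3 * Im z"
    and "0 \<le> (cmod z)\<^sup>2 - Re z - sqrt 3 * Im z"
proof -
  have R: "(cmod z)\<^sup>2 = (Re z)\<^sup>2 + (Im z)\<^sup>2"
    by (rule cmod_power2)
  have h: "\<bar>sqrt 3 * Im z\<bar> \<le> 2 + Re z"
    using assms by (simp add: abs_le_iff field_simps)
  have "(sqrt 3 * Im z)\<^sup>2 \<le> (2 + Re z)\<^sup>2"
    using power_mono[OF h abs_ge_zero, of 2] by simp
  moreover have "(2 * Re z + 1) * (2 * Re z + 4) \<le> 0"
    using assms h by (intro mult_nonpos_nonneg) auto
  ultimately show "(cmod z)\<^sup>2 + 2 * Re z \<le> 0"
    unfolding R by (simp add: power2_eq_square algebra_simps)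
  have "1 \<le> (Re z - 1/2)\<^sup>2"
    using power_mono[of 1 "1/2 - Re z" 2] assms(1) by (simp add: power2_commute)
  then show "0 \<le> (cmod z)\<^sup>2 - Re z + sqrt 3 * Im z" "0 \<le> (cmod z)\<^sup>2 - Re z - sqrt 3 * Im z"
    unfolding R using zero_le_power2[of "Im z + sqrt 3 / 2"] zero_le_power2[of "Im z - sqrt 3 / 2"]
    by (simp_all add: power2_eq_square algebra_simps)
qed

lemma bisect_base_beyond_side_Re_lt:
  assumes e: "e = 1 \<or> e = -1" and z: "Re z \<le> -1/2" "Re (z * \<omega>) \<le> 1" "Re (z * cnj \<omega>) \<le> 1"
    and beyond: "Re (bisect_base e z) < -1/2"
  shows "Re z < -1/2"
proof (rule ccontr)
  assume "\<not> Re z < -1/2"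
  with z(1) have x: "Re z = -1/2" by simp
  have "z \<noteq> 0" using x by auto
  have "\<bar>sqrt 3 * Im z\<bar> \<le> 3/2"
    using z(2,3) x by (simp add: abs_le_iff field_simps)
  moreover have "4 * cmod z * Re (bisect_base e z) < 4 * cmod z * (-1/2)"
    using beyond \<open>z \<noteq> 0\<close> by (intro mult_strict_left_mono) auto
  ultimately show False
    using e bisect_base_coords(1)[OF \<open>z \<noteq> 0\<close>, of e] x by (auto simp: abs_le_iff algebra_simps)
qed

lemma bisect_base_beyond_side:
  assumes e: "e = 1 \<or> e = -1" and z: "Re z \<le> -1/2" "Re (z * \<omega>) \<le> 1" "Re (z * cnj \<omega>) \<le> 1"
    and beyond: "Re (bisect_base e z) < -1/2"
  shows "bisect_base e z \<in> convex hull {z, \<omega>, cnj \<omega>}"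
proof -
  define x y R q where "x = Re z" and "y = Im z" and "R = cmod z" and "q = bisect_base e z"
  have "z \<noteq> 0" using z(1) by auto
  then have "R > 0" by (simp add: R_def)
  have R2: "R\<^sup>2 = x\<^sup>2 + y\<^sup>2"
    unfolding R_def x_def y_def by (rule cmod_power2)
  have Re_q: "4 * R * Re q = (4 * R - 3) * x + e * sqrt 3 * y"
    and Im_q: "4 * R * Im q = (4 * R - 3) * y - e * sqrt 3 * x"
    unfolding x_def y_def R_def q_def by (rule bisect_base_coords[OF \<open>z \<noteq> 0\<close>])+
  have disc: "R\<^sup>2 + 2 * x \<le> 0" and out1: "0 \<le> R\<^sup>2 - x + sqrt 3 * y" and out2: "0 \<le> R\<^sup>2 - x - sqrt 3 * y"
    unfolding x_def y_def R_def using corner_region_discs[OF z] by auto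
  have "x < -1/2"
    unfolding x_def by (rule bisect_base_beyond_side_Re_lt[OF e z beyond])
  have sqrt3: "sqrt 3 * sqrt 3 = (3::real)"
    by simp
  \<comment> \<open>Barycentric coordinates of q with respect to z, \<omega>, cnj \<omega>, with their common denominator D.\<close>
  define D where "D = 4 * R * (2 * x + 1)"
  define E1 where "E1 = 3 * x - sqrt 3 * (1 + e) * y - 2 * e * R\<^sup>2 - e * x"
  define E2 where "E2 = 3 * x - sqrt 3 * (e - 1) * y + 2 * e * R\<^sup>2 + e * x"
  define m0 where "m0 = (2 * Re q + 1) / (2 * x + 1)"
  define m1 where "m1 = E1 / D"
  define m2 where "m2 = E2 / D"
  have "D < 0"
    unfolding D_def using \<open>R > 0\<close> \<open>x < -1/2\<close> by (simp add: mult_pos_neg)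
  have "E1 \<le> 0" "E2 \<le> 0"
    using e disc out1 out2 by (auto simp: E1_def E2_def algebra_simps)
  then have "0 \<le> m0" "0 \<le> m1" "0 \<le> m2"
    unfolding m0_def m1_def m2_def using beyond \<open>x < -1/2\<close> \<open>D < 0\<close>
    by (auto simp: q_def intro: divide_nonpos_nonpos divide_nonpos_neg)
  have Dm: "D * m0 = 4 * R * (2 * Re q + 1)" "D * m1 = E1" "D * m2 = E2"
    unfolding m0_def m1_def m2_def using \<open>x < -1/2\<close> \<open>D < 0\<close> by (auto simp: D_def)
  have "D * (m0 + m1 + m2) = D * 1"
  proof -
    have "D * (m0 + m1 + m2) = D * m0 + D * m1 + D * m2" by (simp add: algebra_simps)
    also have "\<dots> = D * 1"
      unfolding Dm unfolding E1_def E2_def D_def using Re_q by algebra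
    finally show ?thesis .
  qed
  moreover have "D * (m0 * x - (m1 + m2) / 2) = D * Re q"
  proof -
    have "D * (m0 * x - (m1 + m2) / 2) = x * (D * m0) - (D * m1 + D * m2) / 2" by (simp add: algebra_simps)
    also have "\<dots> = D * Re q"
      unfolding Dm unfolding E1_def E2_def D_def using Re_q by algebra
    finally show ?thesis .
  qed
  moreover have "D * (m0 * y + sqrt 3 / 2 * (m1 - m2)) = D * Im q"
  proof -
    have "D * (m0 * y + sqrt 3 / 2 * (m1 - m2)) = y * (D * m0) + sqrt 3 / 2 * (D * m1 - D * m2)"
      by (simp add: algebra_simps)
    also have "\<dots> = D * Im q"
      unfolding Dm unfolding E1_def E2_def D_def using Re_q Im_q R2 sqrt3 by algebra
    finally show ?thesis .
  qed
  ultimately have "m0 + m1 + m2 = 1" "m0 * x - (m1 + m2) / 2 = Re q" "m0 * y + sqrt 3 / 2 * (m1 - m2) = Im q"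
    using \<open>D < 0\<close> by simp_all
  then have "m0 + m1 + m2 = 1" "q = m0 *\<^sub>R z + m1 *\<^sub>R \<omega> + m2 *\<^sub>R cnj \<omega>"
    by (auto simp: complex_eq_iff x_def y_def field_simps)
  with \<open>0 \<le> m0\<close> \<open>0 \<le> m1\<close> \<open>0 \<le> m2\<close> show ?thesis
    unfolding q_def convex_hull_3 by blast
qed

lemma bisect_base_mem:
  assumes e: "e = 1 \<or> e = -1" and z: "Re z \<le> -1/2" "Re (z * \<omega>) \<le> 1" "Re (z * cnj \<omega>) \<le> 1"
  shows "bisect_base e z \<in> convex hull {1, \<omega>, cnj \<omega>} \<union> convex hull {z, \<omega>, cnj \<omega>}"
proof (cases "Re (bisect_base e z) < -1/2")
  case True
  then show ?thesis
    using bisect_base_beyond_side[OF e z] by blast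
next
  case False
  have "1/2 \<le> cmod z"
    using z(1) abs_Re_le_cmod[of z] by linarith
  show ?thesis
  proof (cases "cmod z \<le> 1")
    case True
    then show ?thesis
      using norm_bisect_base_le_half[OF e \<open>1/2 \<le> cmod z\<close>] norm_le_half_mem_convex_hull_omega by blast
  next
    case far: False
    have "-1/2 \<le> Re (bisect_base e z * \<omega>)"
      by (rule bisect_base_far_side) (use e z far in auto)
    moreover have "-1/2 \<le> Re (bisect_base (- e) (cnj z) * \<omega>)"
      by (rule bisect_base_far_side) (use e z far in auto)
    then have "-1/2 \<le> Re (bisect_base e z * cnj \<omega>)"
      by (simp add: bisect_base_cnj)
    ultimately show ?thesis
      using False mem_convex_hull_omega by force
  qed
qed

lemma cis_pi_sixth:
  "cis (pi / 3 / 2) = Complex (sqrt 3 / 2) (1/2)" "cis (- (pi / 3) / 2) = Complex (sqrt 3 / 2) (-1/2)"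
proof -
  have "pi / 3 / 2 = pi / 6" "- (pi / 3) / 2 = - (pi / 6)"
    by simp_all
  then show "cis (pi / 3 / 2) = Complex (sqrt 3 / 2) (1/2)" "cis (- (pi / 3) / 2) = Complex (sqrt 3 / 2) (-1/2)"
    by (simp_all add: complex_eq_iff cos_30 sin_30)
qed

lemma bisect_triangle_eq:
  assumes v: "cmod v * sqrt 3 = 1" and "p \<noteq> 0"
  shows "bisect_triangle p (pi / 3) (1/2) = triangle p (v * bisect_base 1 (p / v)) (v * bisect_base (-1) (p / v))"
proof -
  have "v \<noteq> 0" using v by auto
  have norm_p: "cmod p = cmod (p / v) / sqrt 3"
    using v \<open>v \<noteq> 0\<close> by (simp add: norm_divide field_simps)
  have "p + of_real (1/2) * Complex (sqrt 3 / 2) (e / 2) * (- p / of_real (cmod p)) = v * bisect_base e (p / v)"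
    for e
    using \<open>p \<noteq> 0\<close> \<open>v \<noteq> 0\<close> by (simp add: bisect_base_def norm_p field_simps)
  from this[of 1] this[of "-1"] show ?thesis
    unfolding bisect_triangle_def Let_def cis_pi_sixth by simp
qed

lemma bisect_triangle_subset:
  assumes K: "convex K" and T: "convex hull {v, v * \<omega>, v * cnj \<omega>} \<subseteq> K" and "p \<in> K"
    and v: "cmod v * sqrt 3 = 1"
    and z: "Re (p / v) \<le> -1/2" "Re (p / v * \<omega>) \<le> 1" "Re (p / v * cnj \<omega>) \<le> 1"
  shows "bisect_triangle p (pi / 3) (1/2) \<subseteq> K"
proof -
  have "v \<noteq> 0" using v by auto
  have "p \<noteq> 0" using z(1) by auto
  have "convex hull {p, v * \<omega>, v * cnj \<omega>} \<subseteq> K"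
    using K T hull_subset[of "{v, v * \<omega>, v * cnj \<omega>}"] \<open>p \<in> K\<close> by (intro hull_minimal) auto
  note hulls = T this
  have "v * bisect_base e (p / v) \<in> K" if e: "e = 1 \<or> e = -1" for e
    using bisect_base_mem[OF e z] mult_mem_convex_hull_3[of _ _ _ _ v] hulls \<open>v \<noteq> 0\<close> by fastforce
  then show ?thesis
    unfolding bisect_triangle_eq[OF v \<open>p \<noteq> 0\<close>] triangle_def
    using K \<open>p \<in> K\<close> by (intro hull_minimal) auto
qed

theorem lemma3p2:
  fixes K :: "complex set" and a b c :: complex
  assumes "convex K" and "compact K"
    and "max_area_triangle K a b c"
    and "dist a b = 1" and "dist b c = 1" and "dist c a = 1"
    and "(a + b + c) / 3 = 0"
  shows "\<forall>p \<in> frontier K. bisecting K (pi / 3) (1/2) p"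
proof
  fix p
  assume p: "p \<in> frontier K"
  then have "p \<in> K"
    using frontier_subset_closed[OF compact_imp_closed[OF assms(2)]] by blast
  obtain abc: "{a, b, c} = {a, a * \<omega>, a * cnj \<omega>}" and a: "cmod a * sqrt 3 = 1"
    using equilateral_centred_vertices[OF assms(4-6)] assms(7) by simp
  have T: "convex hull {a, a * \<omega>, a * cnj \<omega>} \<subseteq> K"
    using assms(3) abc by (simp add: max_area_triangle_def triangle_def)
  have "a \<noteq> 0"
    using a by auto
  from frontier_point_beyond_side[OF T this p]
  obtain u where u: "u \<in> {a, a * \<omega>, a * cnj \<omega>}" "Re (p / u) \<le> -1/2" ..
  have rot: "{u, u * \<omega>, u * cnj \<omega>} = {a, a * \<omega>, a * cnj \<omega>}"
    by (rule rotated_vertices[OF u(1)])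
  have u_norm: "cmod u * sqrt 3 = 1" and "u \<noteq> 0"
    using u(1) a by (auto simp: norm_mult norm_omega)
  have "convex hull {u, u * \<omega>, u * cnj \<omega>} \<subseteq> K"
    using T rot by simp
  moreover have "Re (p / u * \<omega>) \<le> 1" "Re (p / u * cnj \<omega>) \<le> 1"
    using max_area_triangle_Re_div_le_rotated[OF assms(1,3) _ \<open>u \<noteq> 0\<close> \<open>p \<in> K\<close>] abc rot by simp_all
  ultimately have "bisect_triangle p (pi / 3) (1/2) \<subseteq> K"
    using bisect_triangle_subset[OF assms(1) _ \<open>p \<in> K\<close> u_norm u(2)] by blast
  with p show "bisecting K (pi / 3) (1/2) p"
    by (simp add: bisecting_def)
qed

end
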